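(* Let $\mathbf z_1,\dots,\mathbf z_d\in\mathbb Z^d$ be a basis of $\mathbb Z^d$. Then for each $\boldsymbol\alpha\in\mathfrak S_2$ we have \[\frac{1}{D_{2,d-1}B_1^{d-1}}\Big(1-\frac{1}{2B_1B_2}\Big)\leq|L_{\boldsymbol\alpha}(\mathbf z_1)|\cdot|\underline{\mathbf z_1}|^{d-1}\leq\frac{1}{D_{2,d-1}B_1^{d-1}}\Big(1+\frac{1}{2B_1B_2}\Big).\]
   Context: Let $d\geq2$. $|\cdot|$ is the Euclidean norm, $\langle\cdot,\cdot\rangle$ the standard inner product. For $\mathbf x=(x_1,\dots,x_d)\in\mathbb R^d$ write $\underline{\mathbf x}=(x_1,\dots,x_{d-1})$. Let $\pi_d=\{\mathbf x\in\mathbb R^d:x_d=1\}$ and $L_{\boldsymbol\alpha}(\mathbf x)=\langle\boldsymbol\alpha,\mathbf x\rangle$ for $\boldsymbol\alpha\in\pi_d$. For given vectors $\mathbf z_1,\mathbf z_2,\dots$: $\det\underline\Lambda_{k,l}=|\underline{\mathbf z_k}\wedge\dots\wedge\underline{\mathbf z_{k+l-1}}|$ ($1\le l\le d-1$); $D_{k,l}=\det\underline\Lambda_{k,l}/|\underline{\mathbf z_k}|^l$; $B_k=|\underline{\mathbf z_{k+1}}|/|\underline{\mathbf z_k}|$; $R_k=1/(2|\underline{\mathbf z_{k+1}}|\det\underline\Lambda_{k,d-1})$; when $\underline{\mathbf z_k},\dots,\underline{\mathbf z_{k+d-2}}$ are linearly independent, $\boldsymbol\alpha_k$ is the unique point of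 $\pi_d$ orthogonal to $\mathbf z_k,\dots,\mathbf z_{k+d-2}$ and $\mathfrak S_k=\{\mathbf x\in\pi_d:|\mathbf x-\boldsymbol\alpha_k|\le R_k\}$. In the claim, $B_2$ and $R_2$ involve a vector $\mathbf z_3$ (with $\mathbf z_3$ among $\mathbf z_1,\dots,\mathbf z_d$ when $d\ge3$; when $d=2$ an additional vector $\mathbf z_3\in\mathbb Z^d$ is assumed given); whenever $\boldsymbol\alpha_k$ or $\mathfrak S_k$ appears it is implicitly assumed well defined. *)

theory Defs
  imports Complex_Main "Jordan_Normal_Form.Determinant"
begin

text \<open>Vectors of R^n are modelled as functions nat => real, only coordinates 0..n-1
  being relevant; the integer vectors z_k (k = 1,2,...) as nat => int.
  Coordinate x_i of the paper is coordinate i-1 here.\<close>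

definition ip :: "nat \<Rightarrow> (nat \<Rightarrow> real) \<Rightarrow> (nat \<Rightarrow> real) \<Rightarrow> real" where
  "ip n x y = (\<Sum>i<n. x i * y i)"

definition nrm :: "nat \<Rightarrow> (nat \<Rightarrow> real) \<Rightarrow> real" where
  "nrm n x = sqrt (ip n x x)"

definition rv :: "(nat \<Rightarrow> int) \<Rightarrow> (nat \<Rightarrow> real)" where
  "rv v = (\<lambda>i. real_of_int (v i))"

definition ul :: "nat \<Rightarrow> (nat \<Rightarrow> real) \<Rightarrow> (nat \<Rightarrow> real)" where
  "ul d x = (\<lambda>i. if i < d - 1 then x i else 0)"

text \<open>Euclidean norm of v_0 wedge ... wedge v_(l-1) in the exterior algebra of R^n,
  i.e. the square root of the Gram determinant.\<close>
definition wedge_norm :: "nat \<Rightarrow> nat \<Rightarrow> (nat \<Rightarrow> nat \<Rightarrow> real) \<Rightarrow> real" where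
  "wedge_norm n l v = sqrt (det (mat l l (\<lambda>(i,j). ip n (v i) (v j))))"

definition lin_indep :: "nat \<Rightarrow> nat \<Rightarrow> (nat \<Rightarrow> nat \<Rightarrow> real) \<Rightarrow> bool" where
  "lin_indep n l v \<longleftrightarrow>
     (\<forall>c :: nat \<Rightarrow> real. (\<forall>i<n. (\<Sum>j<l. c j * v j i) = 0) \<longrightarrow> (\<forall>j<l. c j = 0))"

definition Zbasis :: "nat \<Rightarrow> (nat \<Rightarrow> nat \<Rightarrow> int) \<Rightarrow> bool" where
  "Zbasis d z \<longleftrightarrow>
     (\<forall>v :: nat \<Rightarrow> int. \<exists>!c :: nat \<Rightarrow> int. (\<forall>j. j \<notin> {1..d} \<longrightarrow> c j = 0) \<and>
        (\<forall>i<d. v i = (\<Sum>j=1..d. c j * z j i)))"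

definition detLam :: "nat \<Rightarrow> (nat \<Rightarrow> nat \<Rightarrow> int) \<Rightarrow> nat \<Rightarrow> nat \<Rightarrow> real" where
  "detLam d z k l = wedge_norm (d - 1) l (\<lambda>i. ul d (rv (z (k + i))))"

definition Dkl :: "nat \<Rightarrow> (nat \<Rightarrow> nat \<Rightarrow> int) \<Rightarrow> nat \<Rightarrow> nat \<Rightarrow> real" where
  "Dkl d z k l = detLam d z k l / nrm (d - 1) (ul d (rv (z k))) ^ l"

definition Bk :: "nat \<Rightarrow> (nat \<Rightarrow> nat \<Rightarrow> int) \<Rightarrow> nat \<Rightarrow> real" where
  "Bk d z k = nrm (d - 1) (ul d (rv (z (k + 1)))) / nrm (d - 1) (ul d (rv (z k)))"

definition Rk :: "nat \<Rightarrow> (nat \<Rightarrow> nat \<Rightarrow> int) \<Rightarrow> nat \<Rightarrow> real" where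
  "Rk d z k = 1 / (2 * nrm (d - 1) (ul d (rv (z (k + 1)))) * detLam d z k (d - 1))"

definition in_pi :: "nat \<Rightarrow> (nat \<Rightarrow> real) \<Rightarrow> bool" where
  "in_pi d x \<longleftrightarrow> x (d - 1) = 1 \<and> (\<forall>i\<ge>d. x i = 0)"

definition Lform :: "nat \<Rightarrow> (nat \<Rightarrow> real) \<Rightarrow> (nat \<Rightarrow> real) \<Rightarrow> real" where
  "Lform d \<alpha> x = ip d \<alpha> x"

definition alpha_k :: "nat \<Rightarrow> (nat \<Rightarrow> nat \<Rightarrow> int) \<Rightarrow> nat \<Rightarrow> (nat \<Rightarrow> real)" where
  "alpha_k d z k = (THE a. in_pi d a \<and> (\<forall>j\<in>{k..k + d - 2}. ip d a (rv (z j)) = 0))"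

definition Sk :: "nat \<Rightarrow> (nat \<Rightarrow> nat \<Rightarrow> int) \<Rightarrow> nat \<Rightarrow> (nat \<Rightarrow> real) set" where
  "Sk d z k = {x. in_pi d x \<and> nrm d (\<lambda>i. x i - alpha_k d z k i) \<le> Rk d z k}"

end

theory Submission
  imports Defs "HOL-Analysis.Convex"
begin

(* Write d = n + 1 and let U be the n x n matrix of the first n coordinates of z_2, ..., z_d;
  U is invertible, so alpha_2 exists and is unique. Multiplying the basis matrix by the matrix that
  is the identity except for its last column alpha_2, and expanding along that column, gives
  det (z_1, ..., z_d) = +- L_(alpha_2)(z_1) det U. The basis is unimodular and the Gram determinant
  of U is (det U)^2, hence |L_(alpha_2)(z_1)| = 1 / det Lambda_(2,d-1). A point alpha of S_2 has the
  same last coordinate as alpha_2, so by Cauchy-Schwarz L_alpha(z_1) differs from L_(alpha_2)(z_1)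
  by at most R_2 |underline z_1|; expressing everything through D_(2,d-1), B_1 and B_2 gives the
  two bounds. *)

lemma nrm_nonneg: "0 \<le> nrm n x"
  by (simp add: nrm_def ip_def sum_nonneg)

lemma nrm_ul [simp]: "m \<le> d - 1 \<Longrightarrow> nrm m (ul d x) = nrm m x"
  by (simp add: nrm_def ip_def ul_def)

lemma ip_Suc: "ip (Suc n) x y = ip n x y + x n * y n"
  by (simp add: ip_def)

lemma ip_commute: "ip n x y = ip n y x"
  by (simp add: ip_def mult.commute)

lemma ip_diff_right: "ip n w (\<lambda>i. x i - y i) = ip n w x - ip n w y"
  by (simp add: ip_def right_diff_distrib sum_subtractf)

lemma ip_cong_right: "(\<And>i. i < n \<Longrightarrow> x i = y i) \<Longrightarrow> ip n w x = ip n w y"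
  by (simp add: ip_def)

lemma ip_in_pi: "d = Suc n \<Longrightarrow> in_pi d a \<Longrightarrow> ip d a w = ip n w a + w n"
  by (simp add: in_pi_def ip_Suc ip_commute)

lemma nrm_mono_dim: "m \<le> n \<Longrightarrow> nrm m x \<le> nrm n x"
  unfolding nrm_def ip_def by (intro real_sqrt_le_mono sum_mono2) auto

lemma abs_ip_le_nrm_mult: "\<bar>ip n x y\<bar> \<le> nrm n x * nrm n y"
proof -
  have "(nrm n x)\<^sup>2 = (\<Sum>i<n. (x i)\<^sup>2)" for x
    by (simp add: nrm_def ip_def sum_nonneg power2_eq_square)
  then have "(ip n x y)\<^sup>2 \<le> (nrm n x * nrm n y)\<^sup>2"
    using Cauchy_Schwarz_ineq_sum[of x y "{..<n}"] by (simp add: ip_def power_mult_distrib)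
  then show ?thesis
    using nrm_nonneg[of n x] nrm_nonneg[of n y] by (simp add: power2_le_iff_abs_le)
qed

definition rows_mat :: "nat \<Rightarrow> (nat \<Rightarrow> nat \<Rightarrow> 'a) \<Rightarrow> 'a mat" where
  "rows_mat n v = mat n n (\<lambda>(i, k). v i k)"

lemma rows_mat_carrier [simp]: "rows_mat n v \<in> carrier_mat n n"
  by (simp add: rows_mat_def)

lemma rows_mat_dim [simp]: "dim_row (rows_mat n v) = n" "dim_col (rows_mat n v) = n"
  by (simp_all add: rows_mat_def)

lemma rows_mat_ul [simp]: "m \<le> d - 1 \<Longrightarrow> rows_mat m (\<lambda>i. ul d (v i)) = rows_mat m v"
  by (intro eq_matI) (auto simp: rows_mat_def ul_def)

lemma row_rows_mat_scalar_prod [simp]: "i < n \<Longrightarrow> row (rows_mat n v) i \<bullet> vec n x = ip n (v i) x"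
  by (simp add: rows_mat_def ip_def scalar_prod_def lessThan_atLeast0)

lemma wedge_norm_square: "wedge_norm n n v = \<bar>det (rows_mat n v)\<bar>"
proof -
  let ?U = "rows_mat n v"
  have "mat n n (\<lambda>(i, j). ip n (v i) (v j)) = ?U * transpose_mat ?U"
    by (intro eq_matI) (auto simp: rows_mat_def ip_def scalar_prod_def lessThan_atLeast0)
  also have "det \<dots> = det ?U * det ?U"
    using det_mult[of ?U n "transpose_mat ?U"] det_transpose[of ?U n] by simp
  finally show ?thesis
    by (simp add: wedge_norm_def)
qed

lemma lin_indep_nrm_pos:
  assumes "lin_indep n l v" "j < l"
  shows "0 < nrm n (v j)"
proof -
  define c :: "nat \<Rightarrow> real" where "c = (\<lambda>j'. if j' = j then 1 else 0)"
  have combination: "(\<Sum>j'<l. c j' * v j' i) = v j i" for i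
  proof -
    have "(\<Sum>j'<l. c j' * v j' i) = (\<Sum>j'<l. if j' = j then v j' i else 0)"
      by (intro sum.cong) (auto simp: c_def)
    with assms(2) show ?thesis
      by simp
  qed
  have "\<exists>i<n. v j i \<noteq> 0"
  proof (rule ccontr)
    assume "\<not> ?thesis"
    then have "\<forall>i<n. (\<Sum>j'<l. c j' * v j' i) = 0"
      by (simp add: combination)
    with assms have "c j = 0"
      unfolding lin_indep_def by blast
    then show False
      by (simp add: c_def)
  qed
  then have "ip n (v j) (v j) \<noteq> 0"
    by (auto simp: ip_def sum_nonneg_eq_0_iff)
  moreover have "0 \<le> ip n (v j) (v j)"
    by (simp add: ip_def sum_nonneg)
  ultimately show ?thesis
    by (simp add: nrm_def)
qed

lemma lin_indep_imp_det_nonzero: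
  assumes "lin_indep n n v"
  shows "det (rows_mat n v) \<noteq> 0"
proof
  let ?U = "rows_mat n v"
  assume "det ?U = 0"
  then have "det (transpose_mat ?U) = 0"
    using det_transpose[of ?U n] by simp
  then obtain c where c: "c \<in> carrier_vec n" "c \<noteq> 0\<^sub>v n" "transpose_mat ?U *\<^sub>v c = 0\<^sub>v n"
    using det_0_iff_vec_prod_zero_field[of "transpose_mat ?U" n] by auto
  have "\<forall>i<n. (\<Sum>j<n. c $ j * v j i) = 0"
  proof (intro allI impI)
    fix i assume "i < n"
    then have "(transpose_mat ?U *\<^sub>v c) $ i = 0"
      using c by simp
    with \<open>i < n\<close> c(1) show "(\<Sum>j<n. c $ j * v j i) = 0"
      by (simp add: rows_mat_def scalar_prod_def lessThan_atLeast0 algebra_simps)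
  qed
  moreover have "(\<forall>i<n. (\<Sum>j<n. c $ j * v j i) = 0) \<longrightarrow> (\<forall>j<n. c $ j = 0)"
    using assms unfolding lin_indep_def by (rule allE)
  ultimately have "\<forall>j<n. c $ j = 0"
    by blast
  then have "c = 0\<^sub>v n"
    using c(1) by (intro eq_vecI) auto
  with c(2) show False ..
qed

lemma det_rows_mat_nonzero_kernel:
  assumes "det (rows_mat n v) \<noteq> 0" "\<forall>j<n. ip n (v j) x = 0"
  shows "\<forall>k<n. x k = 0"
proof -
  have "rows_mat n v *\<^sub>v vec n x = 0\<^sub>v n"
    using assms(2) by (intro eq_vecI) simp_all
  moreover have "vec n x \<in> carrier_vec n"
    by simp
  ultimately have "vec n x = 0\<^sub>v n"
    using assms(1) det_0_iff_vec_prod_zero_field[OF rows_mat_carrier] by blast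
  then show ?thesis
    by (auto simp: vec_eq_iff)
qed

lemma det_rows_mat_nonzero_solvable:
  assumes "det (rows_mat n v) \<noteq> 0"
  obtains x where "\<forall>j<n. ip n (v j) x = b j"
proof -
  let ?U = "rows_mat n v"
  obtain B where B: "B \<in> carrier_mat n n" "?U * B = 1\<^sub>m n"
    using det_non_zero_imp_unit[OF rows_mat_carrier assms, of undefined]
    unfolding Units_def ring_mat_def by auto
  define y where "y = B *\<^sub>v vec n b"
  have Uy: "?U *\<^sub>v y = vec n b"
    using B by (simp add: y_def assoc_mult_mat_vec[symmetric, of _ n n _ n])
  have y: "vec n (\<lambda>k. y $ k) = y"
    using B by (intro eq_vecI) (simp_all add: y_def)
  have "ip n (v j) (\<lambda>k. y $ k) = b j" if "j < n" for j
  proof -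
    have "ip n (v j) (\<lambda>k. y $ k) = row ?U j \<bullet> vec n (\<lambda>k. y $ k)"
      using that by simp
    also have "\<dots> = (?U *\<^sub>v y) $ j"
      using that by (simp add: y)
    also have "\<dots> = b j"
      using that by (simp add: Uy)
    finally show ?thesis .
  qed
  then have "\<forall>j<n. ip n (v j) (\<lambda>k. y $ k) = b j"
    by blast
  then show ?thesis ..
qed

lemma ex1_in_pi_orthogonal:
  assumes d: "d = Suc n" and U: "det (rows_mat n w) \<noteq> 0"
  shows "\<exists>!a. in_pi d a \<and> (\<forall>j<n. ip d a (w j) = 0)"
proof -
  obtain x where x: "\<forall>j<n. ip n (w j) x = - w j n"
    using det_rows_mat_nonzero_solvable[OF U, of "\<lambda>j. - w j n"] by blast
  define a where "a = (\<lambda>k. if k < n then x k else if k = n then 1 else 0)"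
  have a_pi: "in_pi d a"
    using d by (simp add: in_pi_def a_def)
  have a_x: "ip n (w j) a = - w j n" if "j < n" for j
  proof -
    have "ip n (w j) a = ip n (w j) x"
      by (rule ip_cong_right) (simp add: a_def)
    with x that show ?thesis
      by simp
  qed
  show ?thesis
  proof (rule ex1I[of _ a])
    show "in_pi d a \<and> (\<forall>j<n. ip d a (w j) = 0)"
      using a_pi a_x ip_in_pi[OF d a_pi] by simp
  next
    fix b assume b: "in_pi d b \<and> (\<forall>j<n. ip d b (w j) = 0)"
    then have b_pi: "in_pi d b"
      by blast
    have "ip n (w j) (\<lambda>k. b k - a k) = 0" if "j < n" for j
    proof -
      have "ip n (w j) b = - w j n"
        using b that ip_in_pi[OF d b_pi, of "w j"] by simp
      with a_x[OF that] show ?thesis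
        by (simp add: ip_diff_right)
    qed
    then have below: "\<forall>k<n. b k - a k = 0"
      using det_rows_mat_nonzero_kernel[OF U] by blast
    show "b = a"
    proof
      fix k
      consider "k < n" | "k = n" | "d \<le> k"
        using d by linarith
      then show "b k = a k"
        by cases (use below b_pi a_pi d in \<open>auto simp: in_pi_def\<close>)
    qed
  qed
qed

lemma alpha_k_orthogonal:
  assumes d: "d = Suc n" "1 \<le> n" and U: "det (rows_mat n (\<lambda>j. rv (z (k + j)))) \<noteq> 0"
  shows "in_pi d (alpha_k d z k) \<and> (\<forall>j<n. ip d (alpha_k d z k) (rv (z (k + j))) = 0)"
proof -
  have range: "(\<forall>j\<in>{k..k + d - 2}. P j) \<longleftrightarrow> (\<forall>j<n. P (k + j))" for P
  proof
    assume "\<forall>j\<in>{k..k + d - 2}. P j"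
    then show "\<forall>j<n. P (k + j)"
      using d by auto
  next
    assume P: "\<forall>j<n. P (k + j)"
    show "\<forall>j\<in>{k..k + d - 2}. P j"
    proof
      fix j assume "j \<in> {k..k + d - 2}"
      then have "j - k < n" "j = k + (j - k)"
        using d by auto
      then show "P j"
        using P by metis
    qed
  qed
  show ?thesis
    unfolding alpha_k_def range by (rule theI'[OF ex1_in_pi_orthogonal[OF d(1) U]])
qed

lemma det_rows_mat_by_normal_point:
  assumes d: "d = Suc n" and a: "in_pi d a" "\<forall>j<n. ip d a (r (Suc j)) = 0"
  shows "det (rows_mat d r) = (-1) ^ n * ip d a (r 0) * det (rows_mat n (\<lambda>j. r (Suc j)))"
proof -
  define N :: "real mat" where
    "N = mat d d (\<lambda>(l, k). if k < n then (if l = k then 1 else 0) else a l)"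
  define P where "P = rows_mat d r * N"
  have N: "N \<in> carrier_mat d d"
    by (simp add: N_def)
  then have P: "P \<in> carrier_mat d d"
    by (simp add: P_def mult_carrier_mat[OF rows_mat_carrier])
  have "det N = (\<Prod>i<d. N $$ (i, i))"
    using det_upper_triangular[OF _ N] d
    by (auto simp: upper_triangular_def N_def prod_list_diag_prod atLeast0LessThan)
  also have "\<dots> = 1"
    using a d by (intro prod.neutral) (auto simp: N_def in_pi_def less_Suc_eq)
  finally have "det P = det (rows_mat d r)"
    using det_mult[OF rows_mat_carrier N] by (simp add: P_def)
  moreover have P_last: "P $$ (i, n) = (if i = 0 then ip d a (r 0) else 0)" if "i < d" for i
  proof -
    have "P $$ (i, n) = ip d a (r i)"
      using that d by (simp add: P_def N_def rows_mat_def scalar_prod_def ip_def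
          lessThan_atLeast0 mult.commute)
    with a(2) that d show ?thesis
      by (cases i) auto
  qed
  moreover have "mat_delete P 0 n = rows_mat n (\<lambda>j. r (Suc j))"
  proof (rule eq_matI)
    fix i j assume "i < dim_row (rows_mat n (\<lambda>j. r (Suc j)))" "j < dim_col (rows_mat n (\<lambda>j. r (Suc j)))"
    then have ij: "i < n" "j < n"
      by simp_all
    have "mat_delete P 0 n $$ (i, j) = (\<Sum>l<d. r (Suc i) l * (if l = j then 1 else 0))"
      using ij d by (simp add: mat_delete_def P_def N_def rows_mat_def scalar_prod_def lessThan_atLeast0)
    also have "\<dots> = r (Suc i) j"
      using ij d by (simp add: if_distrib[of "\<lambda>c. _ * c"] cong: if_cong)
    finally show "mat_delete P 0 n $$ (i, j) = rows_mat n (\<lambda>j. r (Suc j)) $$ (i, j)"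
      using ij by (simp add: rows_mat_def)
  qed (use P d in auto)
  moreover have "det P = ip d a (r 0) * cofactor P 0 n"
  proof -
    have "det P = (\<Sum>i<d. P $$ (i, n) * cofactor P i n)"
      using laplace_expansion_column[OF P] d by simp
    also have "\<dots> = (\<Sum>i<d. if i = 0 then ip d a (r 0) * cofactor P 0 n else 0)"
      by (intro sum.cong) (simp_all add: P_last)
    finally show ?thesis
      using d by simp
  qed
  ultimately show ?thesis
    by (simp add: cofactor_def mult_ac)
qed

lemma Zbasis_abs_det:
  assumes "Zbasis d z"
  shows "\<bar>det (rows_mat d (\<lambda>i. rv (z (Suc i))))\<bar> = 1"
proof -
  have unit_vectors: "\<forall>i. \<exists>c. \<forall>k<d. (if k = i then 1 else 0) = (\<Sum>j=1..d. c j * z j k)"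
  proof
    fix i :: nat
    have "\<exists>!c. (\<forall>j. j \<notin> {1..d} \<longrightarrow> c j = 0) \<and>
        (\<forall>k<d. (if k = i then 1 else 0) = (\<Sum>j=1..d. c j * z j k))"
      using assms unfolding Zbasis_def by (rule allE)
    then show "\<exists>c. \<forall>k<d. (if k = i then 1 else 0) = (\<Sum>j=1..d. c j * z j k)"
      by (rule ex1E) blast
  qed
  obtain c where c: "\<And>i k. k < d \<Longrightarrow> (if k = i then 1 else 0) = (\<Sum>j=1..d. c i j * z j k)"
    using choice[OF unit_vectors] by blast
  define M :: "int mat" where "M = rows_mat d (\<lambda>i. z (Suc i))"
  define C :: "int mat" where "C = mat d d (\<lambda>(i, j). c i (Suc j))"
  have "C * M = 1\<^sub>m d"
  proof (rule eq_matI)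
    fix i k assume "i < dim_row (1\<^sub>m d)" "k < dim_col (1\<^sub>m d)"
    then have ik: "i < d" "k < d"
      by simp_all
    have "(C * M) $$ (i, k) = (\<Sum>j<d. c i (Suc j) * z (Suc j) k)"
      using ik by (simp add: C_def M_def rows_mat_def scalar_prod_def lessThan_atLeast0)
    also have "\<dots> = (\<Sum>j=1..d. c i j * z j k)"
      using sum.atLeast1_atMost_eq[of "\<lambda>j. c i j * z j k" d] by simp
    also have "\<dots> = 1\<^sub>m d $$ (i, k)"
      using ik c[of k i] by auto
    finally show "(C * M) $$ (i, k) = 1\<^sub>m d $$ (i, k)" .
  qed (simp_all add: C_def M_def)
  then have "det C * det M = 1"
    using det_mult[of C d M] by (simp add: C_def M_def)
  then have "\<bar>det M\<bar> = 1"
    by (auto simp: zmult_eq_1_iff)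
  then have "\<bar>real_of_int (det M)\<bar> = 1"
    by (metis of_int_1 of_int_abs)
  moreover have "rows_mat d (\<lambda>i. rv (z (Suc i))) = map_mat real_of_int M"
    by (intro eq_matI) (simp_all add: M_def rows_mat_def rv_def)
  ultimately show ?thesis
    by simp
qed

lemma abs_Lform_diff_le:
  assumes "d = Suc n" "in_pi d \<alpha>" "in_pi d \<beta>"
  shows "\<bar>Lform d \<alpha> x - Lform d \<beta> x\<bar> \<le> nrm d (\<lambda>i. \<alpha> i - \<beta> i) * nrm n x"
proof -
  have "Lform d \<alpha> x - Lform d \<beta> x = ip n (\<lambda>i. \<alpha> i - \<beta> i) x"
    using assms by (simp add: Lform_def ip_in_pi ip_commute ip_diff_right)
  also have "\<bar>\<dots>\<bar> \<le> nrm n (\<lambda>i. \<alpha> i - \<beta> i) * nrm n x"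
    by (rule abs_ip_le_nrm_mult)
  also have "\<dots> \<le> nrm d (\<lambda>i. \<alpha> i - \<beta> i) * nrm n x"
    using assms(1) by (intro mult_right_mono nrm_mono_dim nrm_nonneg) simp
  finally show ?thesis .
qed

lemma abs_Lform_diff_le_Rk:
  assumes "d = Suc n" "in_pi d (alpha_k d z k)" "\<alpha> \<in> Sk d z k"
  shows "\<bar>Lform d \<alpha> x - Lform d (alpha_k d z k) x\<bar> \<le> Rk d z k * nrm n x"
proof -
  have \<alpha>: "in_pi d \<alpha>" "nrm d (\<lambda>i. \<alpha> i - alpha_k d z k i) \<le> Rk d z k"
    using assms(3) by (simp_all add: Sk_def)
  show ?thesis
    using order_trans[OF abs_Lform_diff_le[OF assms(1) \<alpha>(1) assms(2)]
        mult_right_mono[OF \<alpha>(2) nrm_nonneg]] .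
qed

lemma abs_Lform_alpha_2:
  assumes d: "d = Suc n" "1 \<le> n" and "Zbasis d z"
    and U: "det (rows_mat n (\<lambda>j. rv (z (2 + j)))) \<noteq> 0"
  shows "0 < detLam d z 2 (d - 1)" "\<bar>Lform d (alpha_k d z 2) (rv (z 1))\<bar> = 1 / detLam d z 2 (d - 1)"
proof -
  have detLam: "detLam d z 2 (d - 1) = \<bar>det (rows_mat n (\<lambda>j. rv (z (2 + j))))\<bar>"
    by (simp add: detLam_def wedge_norm_square d)
  then show "0 < detLam d z 2 (d - 1)"
    using U by simp
  have "det (rows_mat d (\<lambda>i. rv (z (Suc i))))
      = (-1) ^ n * Lform d (alpha_k d z 2) (rv (z 1)) * det (rows_mat n (\<lambda>j. rv (z (2 + j))))"
    using det_rows_mat_by_normal_point[OF d(1), of "alpha_k d z 2" "\<lambda>i. rv (z (Suc i))"]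
      alpha_k_orthogonal[OF d U] by (simp add: Lform_def)
  then show "\<bar>Lform d (alpha_k d z 2) (rv (z 1))\<bar> = 1 / detLam d z 2 (d - 1)"
    unfolding detLam using Zbasis_abs_det[OF assms(3)] U by (simp add: abs_mult field_simps)
qed

lemma two_sided_bound_by_perturbation:
  fixes D N1 N2 N3 L e :: real and n :: nat
  assumes "0 < D" "0 \<le> N1" "0 < N2" "0 < N3" "1 \<le> n"
    and L: "\<bar>L\<bar> = 1 / D" and e: "\<bar>e\<bar> \<le> N1 / (2 * N3 * D)"
  shows "1 / (D / N2 ^ n * (N2 / N1) ^ n) * (1 - 1 / (2 * (N2 / N1) * (N3 / N2))) \<le> \<bar>L + e\<bar> * N1 ^ n
    \<and> \<bar>L + e\<bar> * N1 ^ n \<le> 1 / (D / N2 ^ n * (N2 / N1) ^ n) * (1 + 1 / (2 * (N2 / N1) * (N3 / N2)))"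
proof (cases "N1 = 0")
  case True
  (* both bounds collapse to 0 through x / 0 = 0 *)
  with assms show ?thesis
    by (simp add: power_0_left)
next
  case False
  with assms have N1: "0 < N1"
    by simp
  have factor: "1 / (D / N2 ^ n * (N2 / N1) ^ n) = N1 ^ n / D"
    and ratio: "1 / (2 * (N2 / N1) * (N3 / N2)) = N1 / (2 * N3)"
    using N1 assms by (simp_all add: power_divide field_simps)
  have "1 / D - N1 / (2 * N3 * D) \<le> \<bar>L + e\<bar>" "\<bar>L + e\<bar> \<le> 1 / D + N1 / (2 * N3 * D)"
    using L e by linarith+
  then have "(1 / D - N1 / (2 * N3 * D)) * N1 ^ n \<le> \<bar>L + e\<bar> * N1 ^ n"
    "\<bar>L + e\<bar> * N1 ^ n \<le> (1 / D + N1 / (2 * N3 * D)) * N1 ^ n"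
    using N1 by (simp_all add: mult_right_mono)
  then show ?thesis
    unfolding factor ratio using assms by (simp add: field_simps)
qed

theorem lemma2:
  fixes d :: nat and z :: "nat \<Rightarrow> nat \<Rightarrow> int" and \<alpha> :: "nat \<Rightarrow> real"
  assumes "d \<ge> 2"
    and "Zbasis d z"
    and "lin_indep (d - 1) (d - 1) (\<lambda>i. ul d (rv (z (2 + i))))"
    and "nrm (d - 1) (ul d (rv (z 3))) \<noteq> 0"
    and "\<alpha> \<in> Sk d z 2"
  shows "1 / (Dkl d z 2 (d - 1) * Bk d z 1 ^ (d - 1)) * (1 - 1 / (2 * Bk d z 1 * Bk d z 2))
           \<le> \<bar>Lform d \<alpha> (rv (z 1))\<bar> * nrm (d - 1) (ul d (rv (z 1))) ^ (d - 1)
       \<and> \<bar>Lform d \<alpha> (rv (z 1))\<bar> * nrm (d - 1) (ul d (rv (z 1))) ^ (d - 1)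
           \<le> 1 / (Dkl d z 2 (d - 1) * Bk d z 1 ^ (d - 1)) * (1 + 1 / (2 * Bk d z 1 * Bk d z 2))"
proof -
  obtain n where d: "d = Suc n" and n: "1 \<le> n"
    using assms(1) by (cases d) auto
  let ?N = "\<lambda>k. nrm (d - 1) (ul d (rv (z k)))"
  let ?L = "\<lambda>a. Lform d a (rv (z 1))"
  have U: "det (rows_mat n (\<lambda>j. rv (z (2 + j)))) \<noteq> 0"
    using lin_indep_imp_det_nonzero[OF assms(3)] by (simp add: d)
  note detLam = abs_Lform_alpha_2[OF d n assms(2) U]
  have "\<bar>?L \<alpha> - ?L (alpha_k d z 2)\<bar> \<le> Rk d z 2 * ?N 1"
    using abs_Lform_diff_le_Rk[OF d _ assms(5)] alpha_k_orthogonal[OF d n U] by (simp add: d)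
  then have e: "\<bar>?L \<alpha> - ?L (alpha_k d z 2)\<bar> \<le> ?N 1 / (2 * ?N 3 * detLam d z 2 (d - 1))"
    by (simp add: Rk_def)
  have N2: "0 < ?N 2"
    using lin_indep_nrm_pos[OF assms(3), of 0] n by (simp add: d)
  have N3: "0 < ?N 3"
    using assms(4) nrm_nonneg[of "d - 1" "ul d (rv (z 3))"] by simp
  have "1 \<le> d - 1" "(2::nat) + 1 = 3"
    using n d by simp_all
  from two_sided_bound_by_perturbation[OF detLam(1) nrm_nonneg N2 N3 this(1) detLam(2) e]
  show ?thesis
    unfolding Dkl_def Bk_def one_add_one \<open>2 + 1 = 3\<close> by simp
qed

end
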